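(* Let $a<b$ and let $w:[a-b,b-a]\to\mathbb R\cup\{+\infty\}$ be an even continuous function. Then the interaction $(x,y)\mapsto w(x-y)$ is well-ordering on $[a,b]$ if and only if (i) $w$ is convex, and (ii) $w(d_0+\delta)+w(d_1+\delta)\le w(d_1)+w(d_0)$ for all $d_0,d_1,\delta>0$ with $d_0+d_1+\delta\le b-a$. Moreover, $(x,y)\mapsto w(x-y)$ is strictly well-ordering on $[a,b]$ if and only if $w$ is strictly convex and the inequality in (ii) is strict for all such $d_0,d_1,\delta>0$.
   Context: Well-ordering: a continuous symmetric $W:J\times J\to\mathbb R\cup\{+\infty\}$ is well-ordering on $J\subset\mathbb R$ if for all $x_1\le x_2\le x_3\le x_4$ in $J$, $W(x_1,x_3)+W(x_2,x_4)=\min\{W(x_{\sigma(1)},x_{\sigma(2)})+W(x_{\sigma(3)},x_{\sigma(4)}):\sigma\text{ a permutation of }\{1,2,3,4\}\}$. It is strictly well-ordering if in addition, for such $x_1\le\dots\le x_4$ and a permutation $\sigma$, equality $W(x_1,x_3)+W(x_2,x_4)=W(x_{\sigma(1)},x_{\sigma(2)})+W(x_{\sigma(3)},x_{\sigma(4)})$ holds only if either $W(x_1,x_3)+W(x_2,x_4)=\infty$, or $\delta_{x_1}+\delta_{x_3}=\delta_{x_{\sigma(1)}}+\delta_{x_{\sigma(2)}}$, or $\delta_{x_1}+\delta_{x_3}=\delta_{x_{\sigma(3)}}+\delta_{x_{\sigma(4)}}$. *)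

theory Defs
  imports "HOL-Analysis.Analysis" "HOL-Library.Multiset"
begin

text \<open>Values in \<open>\<real> \<union> {+\<infinity>}\<close> are modelled as extended reals that are never \<open>-\<infinity>\<close>.
  Points \<open>x\<^sub>1,\<dots>,x\<^sub>4\<close> are modelled as \<open>x 1, \<dots>, x 4\<close> for \<open>x :: nat \<Rightarrow> real\<close>;
  permutations of \<open>{1,2,3,4}\<close> are \<open>\<sigma> permutes {1..4}\<close>.
  The measure \<open>\<delta>\<^sub>p + \<delta>\<^sub>q\<close> is represented by the multiset \<open>{#p, q#}\<close>.\<close>

definition pair_cost :: "(real \<Rightarrow> real \<Rightarrow> ereal) \<Rightarrow> (nat \<Rightarrow> real) \<Rightarrow> (nat \<Rightarrow> nat) \<Rightarrow> ereal" where
  "pair_cost W x \<sigma> = W (x (\<sigma> 1)) (x (\<sigma> 2)) + W (x (\<sigma> 3)) (x (\<sigma> 4))"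

definition well_ordering :: "(real \<Rightarrow> real \<Rightarrow> ereal) \<Rightarrow> real set \<Rightarrow> bool" where
  "well_ordering W J \<longleftrightarrow>
     (\<forall>x\<in>J. \<forall>y\<in>J. W x y \<noteq> -\<infinity>) \<and>
     (\<forall>x\<in>J. \<forall>y\<in>J. W x y = W y x) \<and>
     continuous_on (J \<times> J) (\<lambda>(x, y). W x y) \<and>
     (\<forall>x :: nat \<Rightarrow> real. (\<forall>i\<in>{1..4}. x i \<in> J) \<and> x 1 \<le> x 2 \<and> x 2 \<le> x 3 \<and> x 3 \<le> x 4 \<longrightarrow>
        W (x 1) (x 3) + W (x 2) (x 4) = Min {pair_cost W x \<sigma> | \<sigma>. \<sigma> permutes {1..4}})"

definition strictly_well_ordering :: "(real \<Rightarrow> real \<Rightarrow> ereal) \<Rightarrow> real set \<Rightarrow> bool" where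
  "strictly_well_ordering W J \<longleftrightarrow> well_ordering W J \<and>
     (\<forall>x :: nat \<Rightarrow> real. \<forall>\<sigma>. (\<forall>i\<in>{1..4}. x i \<in> J) \<and> x 1 \<le> x 2 \<and> x 2 \<le> x 3 \<and> x 3 \<le> x 4
        \<and> \<sigma> permutes {1..4} \<and> W (x 1) (x 3) + W (x 2) (x 4) = pair_cost W x \<sigma> \<longrightarrow>
        W (x 1) (x 3) + W (x 2) (x 4) = \<infinity> \<or>
        {# x 1, x 3 #} = {# x (\<sigma> 1), x (\<sigma> 2) #} \<or>
        {# x 1, x 3 #} = {# x (\<sigma> 3), x (\<sigma> 4) #})"

definition ereal_convex_on :: "real set \<Rightarrow> (real \<Rightarrow> ereal) \<Rightarrow> bool" where
  "ereal_convex_on S w \<longleftrightarrow> convex S \<and>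
     (\<forall>x\<in>S. \<forall>y\<in>S. \<forall>t::real. 0 < t \<and> t < 1 \<longrightarrow>
        w ((1 - t) * x + t * y) \<le> ereal (1 - t) * w x + ereal t * w y)"

text \<open>Strict convexity: strict inequality, except when the left-hand side is \<open>+\<infinity>\<close>
  (then both sides are \<open>+\<infinity>\<close>; convention for functions with values in \<open>\<real> \<union> {+\<infinity>}\<close>).\<close>
definition ereal_strictly_convex_on :: "real set \<Rightarrow> (real \<Rightarrow> ereal) \<Rightarrow> bool" where
  "ereal_strictly_convex_on S w \<longleftrightarrow> ereal_convex_on S w \<and>
     (\<forall>x\<in>S. \<forall>y\<in>S. \<forall>t::real. x \<noteq> y \<and> 0 < t \<and> t < 1 \<and> w ((1 - t) * x + t * y) \<noteq> \<infinity> \<longrightarrow>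
        w ((1 - t) * x + t * y) < ereal (1 - t) * w x + ereal t * w y)"

end

theory Submission
  imports Defs
begin

text \<open>
  Sort four points and call their consecutive gaps \<open>p, q, r\<close>. Up to symmetry of the cost there
  are only three ways to pair them, so well-ordering says that the crossing pairing is never more
  expensive than the adjacent or the nested one, for all admissible gaps.
  Crossing versus nested reads \<open>w s + w (u + v - s) \<le> w u + w v\<close> for \<open>u \<le> s \<le> v\<close>: it contains
  midpoint convexity, which together with continuity gives convexity, and conversely follows from
  convexity. Crossing versus adjacent is condition (ii) for positive gaps, extended to zero gaps by
  continuity. For the strict statement, strictness against the nested pairing is equivalent to
  strict convexity (a convex function touching a chord inside touches it at the reflected point as
  well). Strict (ii) reaches the boundary case of a vanishing outer gap because
  \<open>s \<mapsto> w s - w (q + r - s)\<close> is continuous and strictly decreasing on \<open>(0, q + r)\<close>, and it implies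
  (ii) itself since, by the intermediate value theorem, a sum that stays below a finite bound
  while finite cannot jump to \<open>\<infinity>\<close>.
\<close>

lemma continuous_on_closure_le:
  fixes f g :: "'a::topological_space \<Rightarrow> 'b::linorder_topology"
  assumes f: "continuous_on (closure T) f" and g: "continuous_on (closure T) g"
    and le: "\<And>y. y \<in> T \<Longrightarrow> f y \<le> g y" and x: "x \<in> closure T"
  shows "f x \<le> g x"
proof (cases "x \<in> T")
  case True
  then show ?thesis by (rule le)
next
  case False
  with x have nontrivial: "at x within T \<noteq> bot"
    by (simp add: closure_def trivial_limit_within)
  have lim: "(f \<longlongrightarrow> f x) (at x within T)" "(g \<longlongrightarrow> g x) (at x within T)"
    using f g x by (auto simp: continuous_on_def intro: tendsto_within_subset[OF _ closure_subset])
  have "eventually (\<lambda>y. f y \<le> g y) (at x within T)"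
    using le by (auto simp: eventually_at_filter)
  then show ?thesis
    using tendsto_le[OF nontrivial lim(2) lim(1)] by blast
qed

lemma continuous_on_add_ereal:
  fixes f g :: "'a::topological_space \<Rightarrow> ereal"
  assumes "continuous_on S f" "continuous_on S g"
    and "\<And>x. x \<in> S \<Longrightarrow> f x \<noteq> -\<infinity>" "\<And>x. x \<in> S \<Longrightarrow> g x \<noteq> -\<infinity>"
  shows "continuous_on S (\<lambda>x. f x + g x)"
  using assms by (auto simp: continuous_on_def intro!: tendsto_add_ereal_general)

lemma continuous_strict_antimono_on_closed:
  fixes k :: "real \<Rightarrow> real"
  assumes cont: "continuous_on {lo..hi} k"
    and dec: "\<And>u v. lo < u \<Longrightarrow> u < v \<Longrightarrow> v < hi \<Longrightarrow> k v < k u"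
    and uv: "lo \<le> u" "u < v" "v \<le> hi"
  shows "k v < k u"
proof -
  define u' v' where "u' = u + (v - u) / 3" and "v' = v - (v - u) / 3"
  have order: "u < u'" "u' < v'" "v' < v"
    using uv by (simp_all add: u'_def v'_def field_simps)
  have "k u' \<le> k u"
  proof (rule continuous_on_closure_le[where T = "{u<..u'}" and f = "\<lambda>_. k u'" and g = k])
    show "continuous_on (closure {u<..u'}) k"
      using order uv by (auto intro: continuous_on_subset[OF cont])
    show "k u' \<le> k y" if "y \<in> {u<..u'}" for y
      using that dec[of y u'] order uv by (cases "y = u'") auto
  qed (use order in auto)
  moreover have "k v \<le> k v'"
  proof (rule continuous_on_closure_le[where T = "{v'..<v}" and f = k and g = "\<lambda>_. k v'"])
    show "continuous_on (closure {v'..<v}) k"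
      using order uv by (auto intro: continuous_on_subset[OF cont])
    show "k y \<le> k v'" if "y \<in> {v'..<v}" for y
      using that dec[of v' y] order uv by (cases "y = v'") auto
  qed (use order in auto)
  moreover have "k v' < k u'"
    using dec[of u' v'] order uv by auto
  ultimately show ?thesis by linarith
qed

lemma continuous_midpoint_convex_below_chord:
  fixes g :: "real \<Rightarrow> real"
  assumes xy: "x < y" and cont: "continuous_on {x..y} g"
    and mid: "\<And>m h. 0 \<le> h \<Longrightarrow> x \<le> m - h \<Longrightarrow> m + h \<le> y \<Longrightarrow> 2 * g m \<le> g (m - h) + g (m + h)"
    and z: "z \<in> {x..y}"
  shows "g z \<le> g x + (z - x) / (y - x) * (g y - g x)"
proof (rule ccontr)
  assume above: "\<not> ?thesis"
  define c where "c = (g y - g x) / (y - x)"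
  define \<phi> where "\<phi> s = g s - (g x + (s - x) * c)" for s
  have \<phi>_mid: "2 * \<phi> m \<le> \<phi> (m - h) + \<phi> (m + h)" if "0 \<le> h" "x \<le> m - h" "m + h \<le> y" for m h
    using mid[OF that] unfolding \<phi>_def by (simp add: algebra_simps)
  have \<phi>_cont: "continuous_on {x..y} \<phi>"
    unfolding \<phi>_def by (intro continuous_intros cont)
  have \<phi>_ends: "\<phi> x = 0" "\<phi> y = 0"
    unfolding \<phi>_def c_def using xy by auto
  obtain z0 where z0: "z0 \<in> {x..y}" "\<And>s. s \<in> {x..y} \<Longrightarrow> \<phi> s \<le> \<phi> z0"
    using continuous_attains_sup[OF compact_Icc _ \<phi>_cont] xy by fastforce
  define M where "M = \<phi> z0"
  have "\<phi> z > 0"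
    using above unfolding \<phi>_def c_def by simp
  then have "M > 0"
    using z0 z M_def by fastforce
  \<comment> \<open>the leftmost maximiser cannot satisfy midpoint convexity\<close>
  define K where "K = {x..y} \<inter> \<phi> -` {M}"
  have "closed K"
    unfolding K_def by (rule continuous_closed_preimage[OF \<phi>_cont]) auto
  moreover have "K \<noteq> {}"
    using z0 M_def K_def by auto
  moreover have K_bdd: "bdd_below K"
    unfolding K_def by (rule bdd_belowI[of _ x]) auto
  ultimately have mK: "Inf K \<in> K"
    by (rule closed_contains_Inf[rotated -1])
  define m where "m = Inf K"
  have m: "x < m" "m < y" "\<phi> m = M"
    using mK \<open>M > 0\<close> \<phi>_ends unfolding K_def m_def by (auto simp: le_less)
  define h where "h = min (m - x) (y - m)"
  have h: "0 < h" "x \<le> m - h" "m + h \<le> y"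
    using m h_def by auto
  have "m - h \<notin> K"
    using cInf_lower[OF _ K_bdd, of "m - h"] h unfolding m_def by auto
  then have "\<phi> (m - h) < M"
    using z0(2)[of "m - h"] h m unfolding K_def M_def by fastforce
  moreover have "\<phi> (m + h) \<le> M"
    using z0(2)[of "m + h"] h m unfolding M_def by auto
  ultimately show False
    using \<phi>_mid[of h m] h m(3) by linarith
qed

lemma convex_combination_strictly_between:
  fixes x y t :: real
  assumes "x < y" "0 < t" "t < 1"
  shows "x < (1 - t) * x + t * y" "(1 - t) * x + t * y < y"
proof -
  have "0 < t * (y - x)" "0 < (1 - t) * (y - x)"
    using assms by simp_all
  then show "x < (1 - t) * x + t * y" "(1 - t) * x + t * y < y"
    by (simp_all add: algebra_simps)
qed

lemma continuous_midpoint_convex_imp_convex_on: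
  fixes g :: "real \<Rightarrow> real"
  assumes cont: "continuous_on {x..y} g"
    and mid: "\<And>m h. 0 \<le> h \<Longrightarrow> x \<le> m - h \<Longrightarrow> m + h \<le> y \<Longrightarrow> 2 * g m \<le> g (m - h) + g (m + h)"
  shows "convex_on {x..y} g"
proof (rule convex_on_linorderI)
  fix t u v :: real
  assume t: "0 < t" "t < 1" and uv: "u \<in> {x..y}" "v \<in> {x..y}" "u < v"
  define z where "z = (1 - t) * u + t * v"
  have z: "z \<in> {u..v}"
    using convex_combination_strictly_between[OF uv(3) t] by (simp add: z_def)
  have z_u: "(z - u) / (v - u) = t"
    using uv by (simp add: z_def field_simps)
  have "g z \<le> g u + (z - u) / (v - u) * (g v - g u)"
  proof (rule continuous_midpoint_convex_below_chord[OF uv(3) _ _ z])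
    show "continuous_on {u..v} g"
      using uv by (auto intro: continuous_on_subset[OF cont])
  qed (use mid uv in auto)
  then show "g ((1 - t) *\<^sub>R u + t *\<^sub>R v) \<le> (1 - t) * g u + t * g v"
    unfolding z_u by (simp add: z_def algebra_simps)
qed simp

lemma between_convex_combination_with_endpoint:
  fixes x y z z' :: real
  assumes z: "x < z" "z < y" and z': "x < z'" "z' < y" and "z \<noteq> z'"
  obtains e m where "e = x \<or> e = y" "0 < m" "m < 1" "(1 - m) * z' + m * e = z"
proof (cases "z' < z")
  case True
  define m where "m = (z - z') / (y - z')"
  have "m * (y - z') = z - z'"
    using z' by (simp add: m_def)
  then have "(1 - m) * z' + m * y = z"
    by (simp add: algebra_simps)
  then show ?thesis
    using that[of y m] True z z' by (auto simp: m_def field_simps)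
next
  case False
  define m where "m = (z' - z) / (z' - x)"
  have "m * (z' - x) = z' - z"
    using z' by (simp add: m_def)
  then have "(1 - m) * z' + m * x = z"
    by (simp add: algebra_simps)
  then show ?thesis
    using that[of x m] False \<open>z \<noteq> z'\<close> z z' by (auto simp: m_def field_simps)
qed

lemma convex_on_strictly_below_chord:
  fixes g :: "real \<Rightarrow> real"
  assumes xy: "x < y" and conv: "convex_on {x..y} g"
    and pairs: "\<And>s. x < s \<Longrightarrow> s < y \<Longrightarrow> g s + g (x + y - s) < g x + g y"
    and t: "0 < t" "t < 1"
  shows "g ((1 - t) * x + t * y) < (1 - t) * g x + t * g y"
proof (rule ccontr)
  assume not_below: "\<not> ?thesis"
  define z where "z = (1 - t) * x + t * y"
  define z' where "z' = x + y - z"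
  define c where "c = (g y - g x) / (y - x)"
  define l where "l s = g x + (s - x) * c" for s
  have l_affine: "(1 - m) * l a + m * l b = l ((1 - m) * a + m * b)" for m a b
    unfolding l_def by (simp add: algebra_simps)
  have c: "(y - x) * c = g y - g x"
    unfolding c_def using xy by simp
  have l_ends: "l x = g x" "l y = g y"
    unfolding l_def using c by auto
  have z: "x < z" "z < y"
    using convex_combination_strictly_between[OF xy t] by (simp_all add: z_def)
  then have z': "x < z'" "z' < y"
    by (auto simp: z'_def)
  have "l z = (1 - t) * g x + t * g y"
    using l_affine[of t x y] l_ends z_def by simp
  then have touch: "l z \<le> g z"
    using not_below z_def by simp
  have "l z + l z' = g x + g y"
    using c unfolding l_def z'_def by (simp add: algebra_simps)
  moreover have "g z + g z' < g x + g y"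
    using pairs[OF z] z'_def by simp
  ultimately have below: "g z' < l z'"
    using touch by simp
  \<comment> \<open>z is a proper convex combination of z', where g is below the chord, and an endpoint\<close>
  have "z \<noteq> z'"
    using touch below by auto
  then obtain e m where e: "e = x \<or> e = y" and m: "0 < m" "m < 1" and em: "(1 - m) * z' + m * e = z"
    using between_convex_combination_with_endpoint[OF z z'] by blast
  have "g z \<le> (1 - m) * g z' + m * g e"
    using convex_onD[OF conv, of m z' e] m z' e xy em by auto
  also have "\<dots> < (1 - m) * l z' + m * l e"
    using below m e l_ends by auto
  also have "\<dots> = l z"
    using l_affine em by simp
  finally show False using touch by simp
qed

section \<open>Convexity of extended-real functions\<close>

lemma ereal_convex_combination_PInf:
  assumes "0 < t" "t < 1" "a \<noteq> -\<infinity>" "b \<noteq> -\<infinity>" "a = \<infinity> \<or> b = \<infinity>"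
  shows "ereal (1 - t) * a + ereal t * b = \<infinity>"
  using assms by (cases a; cases b) auto

lemma ereal_convex_combination_same:
  assumes "0 < t" "t < 1"
  shows "ereal (1 - t) * a + ereal t * a = a"
  using assms by (cases a) (auto simp: algebra_simps)

lemma ereal_convex_onI:
  fixes w :: "real \<Rightarrow> ereal"
  assumes S: "convex S" and ninf: "\<forall>z\<in>S. w z \<noteq> -\<infinity>"
    and ineq: "\<And>x y t. x \<in> S \<Longrightarrow> y \<in> S \<Longrightarrow> x < y \<Longrightarrow> w x \<noteq> \<infinity> \<Longrightarrow> w y \<noteq> \<infinity> \<Longrightarrow>
      0 < t \<Longrightarrow> t < 1 \<Longrightarrow> w ((1 - t) * x + t * y) \<le> ereal (1 - t) * w x + ereal t * w y"
  shows "ereal_convex_on S w"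
  unfolding ereal_convex_on_def
proof (intro conjI S ballI allI impI)
  fix x y t :: real assume xy: "x \<in> S" "y \<in> S" and t: "0 < t \<and> t < 1"
  consider "w x = \<infinity> \<or> w y = \<infinity>" | "x = y" | "w x \<noteq> \<infinity>" "w y \<noteq> \<infinity>" "x < y \<or> y < x"
    by fastforce
  then show "w ((1 - t) * x + t * y) \<le> ereal (1 - t) * w x + ereal t * w y"
  proof cases
    case 1
    have rhs: "ereal (1 - t) * w x + ereal t * w y = \<infinity>"
      by (rule ereal_convex_combination_PInf) (use 1 t xy ninf in auto)
    show ?thesis
      unfolding rhs by simp
  next
    case 2
    then show ?thesis
      using ereal_convex_combination_same[of t "w x"] t by (simp add: algebra_simps)
  next
    case 3
    then show ?thesis
      using ineq[of x y t] ineq[of y x "1 - t"] xy t by (auto simp: add.commute)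
  qed
qed

lemma ereal_strictly_convex_onI:
  fixes w :: "real \<Rightarrow> ereal"
  assumes conv: "ereal_convex_on S w" and ninf: "\<forall>z\<in>S. w z \<noteq> -\<infinity>"
    and ineq: "\<And>x y t. x \<in> S \<Longrightarrow> y \<in> S \<Longrightarrow> x < y \<Longrightarrow> w x \<noteq> \<infinity> \<Longrightarrow> w y \<noteq> \<infinity> \<Longrightarrow>
      0 < t \<Longrightarrow> t < 1 \<Longrightarrow> w ((1 - t) * x + t * y) < ereal (1 - t) * w x + ereal t * w y"
  shows "ereal_strictly_convex_on S w"
  unfolding ereal_strictly_convex_on_def
proof (intro conjI conv ballI allI impI)
  fix x y t :: real
  assume xy: "x \<in> S" "y \<in> S" and h: "x \<noteq> y \<and> 0 < t \<and> t < 1 \<and> w ((1 - t) * x + t * y) \<noteq> \<infinity>"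
  consider "w x = \<infinity> \<or> w y = \<infinity>" | "w x \<noteq> \<infinity>" "w y \<noteq> \<infinity>" "x < y \<or> y < x"
    using h by fastforce
  then show "w ((1 - t) * x + t * y) < ereal (1 - t) * w x + ereal t * w y"
  proof cases
    case 1
    have "ereal (1 - t) * w x + ereal t * w y = \<infinity>"
      by (rule ereal_convex_combination_PInf) (use 1 h xy ninf in auto)
    then show ?thesis
      using h by (cases "w ((1 - t) * x + t * y)") auto
  next
    case 2
    then show ?thesis
      using ineq[of x y t] ineq[of y x "1 - t"] xy h by (auto simp: add.commute)
  qed
qed

lemma symmetric_pair_convex_combination:
  fixes u s v :: real
  assumes "u < s" "s < v"
  obtains t where "0 < t" "t < 1" "(1 - t) * u + t * v = s" "(1 - (1 - t)) * u + (1 - t) * v = u + v - s"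
proof
  define t where "t = (s - u) / (v - u)"
  show "0 < t" "t < 1"
    using assms by (auto simp: t_def field_simps)
  have "t * (v - u) = s - u"
    using assms by (simp add: t_def)
  then show "(1 - t) * u + t * v = s" "(1 - (1 - t)) * u + (1 - t) * v = u + v - s"
    by (simp_all add: algebra_simps)
qed

lemma ereal_convex_on_symmetric_pair:
  fixes w :: "real \<Rightarrow> ereal"
  assumes conv: "ereal_convex_on S w" and ninf: "\<forall>z\<in>S. w z \<noteq> -\<infinity>"
    and uv: "u \<in> S" "v \<in> S" and s: "u \<le> s" "s \<le> v"
  shows "w s + w (u + v - s) \<le> w u + w v"
proof -
  consider "w u = \<infinity> \<or> w v = \<infinity>" | "s = u \<or> s = v" | "w u \<noteq> \<infinity>" "w v \<noteq> \<infinity>" "u < s" "s < v"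
    using s by fastforce
  then show ?thesis
  proof cases
    case 1
    then have "w u + w v = \<infinity>"
      using ninf uv by auto
    then show ?thesis by (metis ereal_less_eq(1))
  next
    case 2
    then show ?thesis by (auto simp: add.commute)
  next
    case 3
    obtain U V where U: "w u = ereal U" and V: "w v = ereal V"
      using 3 ninf uv by (cases "w u"; cases "w v") auto
    obtain t where t: "0 < t" "t < 1"
      and pts: "(1 - t) * u + t * v = s" "(1 - (1 - t)) * u + (1 - t) * v = u + v - s"
      using symmetric_pair_convex_combination 3 by blast
    have "w s \<le> ereal (1 - t) * w u + ereal t * w v"
      using conv[unfolded ereal_convex_on_def, THEN conjunct2, rule_format, of u v t] uv t pts(1)
      by simp
    moreover have "w (u + v - s) \<le> ereal (1 - (1 - t)) * w u + ereal (1 - t) * w v"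
      using conv[unfolded ereal_convex_on_def, THEN conjunct2, rule_format, of u v "1 - t"] uv t pts(2)
      by simp
    ultimately have "w s + w (u + v - s) \<le> ereal ((1 - t) * U + t * V + ((1 - (1 - t)) * U + (1 - t) * V))"
      using add_mono U V by fastforce
    then show ?thesis
      using U V by (simp add: algebra_simps)
  qed
qed

lemma ereal_strictly_convex_on_symmetric_pair:
  fixes w :: "real \<Rightarrow> ereal"
  assumes conv: "ereal_strictly_convex_on S w" and ninf: "\<forall>z\<in>S. w z \<noteq> -\<infinity>"
    and uv: "u \<in> S" "v \<in> S" and s: "u < s" "s < v" and fin: "w s + w (u + v - s) \<noteq> \<infinity>"
  shows "w s + w (u + v - s) < w u + w v"
proof -
  have S: "is_interval S"
    using conv by (simp add: ereal_strictly_convex_on_def ereal_convex_on_def is_interval_convex_1)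
  have "s \<in> S" "u + v - s \<in> S"
    using mem_is_interval_1_I[OF S uv] s by auto
  then obtain A B where A: "w s = ereal A" and B: "w (u + v - s) = ereal B"
    using fin ninf by (cases "w s"; cases "w (u + v - s)") auto
  show ?thesis
  proof (cases "w u = \<infinity> \<or> w v = \<infinity>")
    case True
    then have rhs: "w u + w v = \<infinity>"
      using ninf uv by auto
    show ?thesis
      unfolding rhs using A B by simp
  next
    case False
    obtain U V where U: "w u = ereal U" and V: "w v = ereal V"
      using False ninf uv by (cases "w u"; cases "w v") auto
    obtain t where t: "0 < t" "t < 1"
      and pts: "(1 - t) * u + t * v = s" "(1 - (1 - t)) * u + (1 - t) * v = u + v - s"
      using symmetric_pair_convex_combination s by blast
    have "w s < ereal (1 - t) * w u + ereal t * w v"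
      using conv[unfolded ereal_strictly_convex_on_def, THEN conjunct2, rule_format, of u v t]
        uv t s A pts(1) by simp
    moreover have "w (u + v - s) \<le> ereal (1 - (1 - t)) * w u + ereal (1 - t) * w v"
      using conv[unfolded ereal_strictly_convex_on_def ereal_convex_on_def, THEN conjunct1,
          THEN conjunct2, rule_format, of u v "1 - t"] uv t pts(2) by simp
    ultimately have "A < (1 - t) * U + t * V" "B \<le> t * U + (1 - t) * V"
      using A B U V by simp_all
    then show ?thesis
      using A B U V by (simp add: algebra_simps)
  qed
qed

section \<open>Crossing inequalities\<close>

text \<open>For four points with consecutive gaps \<open>p, q, r\<close>, the crossing pairing \<open>{1,3},{2,4}\<close> costs
  \<open>w (p + q) + w (q + r)\<close>, the adjacent pairing \<open>{1,2},{3,4}\<close> costs \<open>w p + w r\<close> and the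
  nested pairing \<open>{1,4},{2,3}\<close> costs \<open>w q + w (p + q + r)\<close>.\<close>

definition crossing_le_nested :: "(real \<Rightarrow> ereal) \<Rightarrow> real \<Rightarrow> bool" where
  "crossing_le_nested w L \<longleftrightarrow> (\<forall>p q r. 0 \<le> p \<and> 0 \<le> q \<and> 0 \<le> r \<and> p + q + r \<le> L \<longrightarrow>
     w (p + q) + w (q + r) \<le> w q + w (p + q + r))"

definition crossing_less_nested :: "(real \<Rightarrow> ereal) \<Rightarrow> real \<Rightarrow> bool" where
  "crossing_less_nested w L \<longleftrightarrow> (\<forall>p q r. 0 < p \<and> 0 \<le> q \<and> 0 < r \<and> p + q + r \<le> L \<and>
     w (p + q) + w (q + r) \<noteq> \<infinity> \<longrightarrow> w (p + q) + w (q + r) < w q + w (p + q + r))"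

definition crossing_le_adjacent :: "(real \<Rightarrow> ereal) \<Rightarrow> real \<Rightarrow> bool" where
  "crossing_le_adjacent w L \<longleftrightarrow> (\<forall>p q r. 0 \<le> p \<and> 0 \<le> q \<and> 0 \<le> r \<and> p + q + r \<le> L \<longrightarrow>
     w (p + q) + w (q + r) \<le> w p + w r)"

definition crossing_less_adjacent :: "(real \<Rightarrow> ereal) \<Rightarrow> real \<Rightarrow> bool" where
  "crossing_less_adjacent w L \<longleftrightarrow> (\<forall>p q r. 0 \<le> p \<and> 0 < q \<and> 0 \<le> r \<and> p + q + r \<le> L \<and>
     w (p + q) + w (q + r) \<noteq> \<infinity> \<longrightarrow> w (p + q) + w (q + r) < w p + w r)"

lemma crossing_le_nestedD:
  assumes "crossing_le_nested w L" "0 \<le> u" "u \<le> s" "s \<le> v" "v \<le> L"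
  shows "w s + w (u + v - s) \<le> w u + w v"
  using assms(1)[unfolded crossing_le_nested_def, rule_format, of "s - u" u "v - s"] assms(2-)
  by (simp add: algebra_simps)

lemma crossing_le_nested_finite:
  assumes nested: "crossing_le_nested w L" and ninf: "\<forall>z\<in>{0..L}. w z \<noteq> -\<infinity>"
    and uv: "0 \<le> u" "u \<le> s" "s \<le> v" "v \<le> L" and fin: "w u \<noteq> \<infinity>" "w v \<noteq> \<infinity>"
  shows "\<bar>w s\<bar> \<noteq> \<infinity>"
proof -
  have "w s + w (u + v - s) \<le> w u + w v"
    using crossing_le_nestedD[OF nested uv] .
  moreover have "w s \<noteq> -\<infinity>" "w (u + v - s) \<noteq> -\<infinity>" "w u \<noteq> -\<infinity>" "w v \<noteq> -\<infinity>"
    using ninf uv by auto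
  ultimately show ?thesis
    using fin by (cases "w s"; cases "w (u + v - s)"; cases "w u"; cases "w v") auto
qed

lemma crossing_le_nested_real_part:
  assumes nested: "crossing_le_nested w L" and ninf: "\<forall>z\<in>{0..L}. w z \<noteq> -\<infinity>"
    and cont: "continuous_on {0..L} w"
    and uv: "0 \<le> u" "u < v" "v \<le> L" and fin: "w u \<noteq> \<infinity>" "w v \<noteq> \<infinity>"
  obtains g where "\<And>s. s \<in> {u..v} \<Longrightarrow> w s = ereal (g s)"
    and "continuous_on {u..v} g" and "convex_on {u..v} g"
proof
  define g where "g s = real_of_ereal (w s)" for s
  have finite: "\<bar>w s\<bar> \<noteq> \<infinity>" if "s \<in> {u..v}" for s
    using crossing_le_nested_finite[OF nested ninf uv(1) _ _ uv(3) fin] that by auto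
  then show w_g: "w s = ereal (g s)" if "s \<in> {u..v}" for s
    using that by (simp add: g_def ereal_real)
  have "continuous_on {u..v} w"
    using uv by (auto intro: continuous_on_subset[OF cont])
  then show g_cont: "continuous_on {u..v} g"
    using continuous_on_iff_real[of "{u..v}" w] finite by (simp add: g_def comp_def)
  show "convex_on {u..v} g"
  proof (rule continuous_midpoint_convex_imp_convex_on[OF g_cont])
    fix m h :: real
    assume mh: "0 \<le> h" "u \<le> m - h" "m + h \<le> v"
    have "w m + w m \<le> w (m - h) + w (m + h)"
      using crossing_le_nestedD[OF nested, of "m - h" m "m + h"] mh uv by simp
    then show "2 * g m \<le> g (m - h) + g (m + h)"
      using w_g[of m] w_g[of "m - h"] w_g[of "m + h"] mh by simp
  qed
qed

lemma crossing_le_nested_iff_ereal_convex_on: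
  fixes w :: "real \<Rightarrow> ereal"
  assumes ninf: "\<forall>z\<in>{0..L}. w z \<noteq> -\<infinity>" and cont: "continuous_on {0..L} w"
  shows "crossing_le_nested w L \<longleftrightarrow> ereal_convex_on {0..L} w"
proof
  assume nested: "crossing_le_nested w L"
  show "ereal_convex_on {0..L} w"
  proof (rule ereal_convex_onI[OF _ ninf])
    fix x y t :: real
    assume xy: "x \<in> {0..L}" "y \<in> {0..L}" "x < y" and fin: "w x \<noteq> \<infinity>" "w y \<noteq> \<infinity>"
      and t: "0 < t" "t < 1"
    obtain g where w_g: "\<And>s. s \<in> {x..y} \<Longrightarrow> w s = ereal (g s)" and conv: "convex_on {x..y} g"
      using crossing_le_nested_real_part[OF nested ninf cont _ xy(3) _ fin] xy by auto
    have z: "(1 - t) * x + t * y \<in> {x..y}"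
      using convex_combination_strictly_between[OF xy(3) t] by simp
    have "g ((1 - t) * x + t * y) \<le> (1 - t) * g x + t * g y"
      using convex_onD[OF conv, of t x y] t xy by simp
    then show "w ((1 - t) * x + t * y) \<le> ereal (1 - t) * w x + ereal t * w y"
      using w_g[OF z] w_g[of x] w_g[of y] xy by simp
  qed simp
next
  assume conv: "ereal_convex_on {0..L} w"
  show "crossing_le_nested w L"
    unfolding crossing_le_nested_def
  proof (intro allI impI)
    fix p q r :: real
    assume pqr: "0 \<le> p \<and> 0 \<le> q \<and> 0 \<le> r \<and> p + q + r \<le> L"
    have "q + (p + q + r) - (p + q) = q + r"
      by simp
    then show "w (p + q) + w (q + r) \<le> w q + w (p + q + r)"
      using ereal_convex_on_symmetric_pair[OF conv ninf, of q "p + q + r" "p + q"] pqr by simp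
  qed
qed

lemma ereal_strictly_convex_on_iff_crossing_less_nested:
  fixes w :: "real \<Rightarrow> ereal"
  assumes ninf: "\<forall>z\<in>{0..L}. w z \<noteq> -\<infinity>" and cont: "continuous_on {0..L} w"
  shows "ereal_strictly_convex_on {0..L} w \<longleftrightarrow> ereal_convex_on {0..L} w \<and> crossing_less_nested w L"
proof
  assume sconv: "ereal_strictly_convex_on {0..L} w"
  have "crossing_less_nested w L"
    unfolding crossing_less_nested_def
  proof (intro allI impI)
    fix p q r :: real
    assume pqr: "0 < p \<and> 0 \<le> q \<and> 0 < r \<and> p + q + r \<le> L \<and> w (p + q) + w (q + r) \<noteq> \<infinity>"
    have "q + (p + q + r) - (p + q) = q + r"
      by simp
    then show "w (p + q) + w (q + r) < w q + w (p + q + r)"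
      using ereal_strictly_convex_on_symmetric_pair[OF sconv ninf, of q "p + q + r" "p + q"] pqr by simp
  qed
  then show "ereal_convex_on {0..L} w \<and> crossing_less_nested w L"
    using sconv by (simp add: ereal_strictly_convex_on_def)
next
  assume "ereal_convex_on {0..L} w \<and> crossing_less_nested w L"
  then have conv: "ereal_convex_on {0..L} w" and less: "crossing_less_nested w L"
    by auto
  have nested: "crossing_le_nested w L"
    using conv crossing_le_nested_iff_ereal_convex_on[OF ninf cont] by simp
  show "ereal_strictly_convex_on {0..L} w"
  proof (rule ereal_strictly_convex_onI[OF conv ninf])
    fix x y t :: real
    assume xy: "x \<in> {0..L}" "y \<in> {0..L}" "x < y" and fin: "w x \<noteq> \<infinity>" "w y \<noteq> \<infinity>"
      and t: "0 < t" "t < 1"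
    obtain g where w_g: "\<And>s. s \<in> {x..y} \<Longrightarrow> w s = ereal (g s)" and g_conv: "convex_on {x..y} g"
      using crossing_le_nested_real_part[OF nested ninf cont _ xy(3) _ fin] xy by auto
    have pairs: "g s + g (x + y - s) < g x + g y" if s: "x < s" "s < y" for s
    proof -
      have "w (s - x + x) + w (x + (y - s)) < w x + w (s - x + x + (y - s))"
        using less[unfolded crossing_less_nested_def, rule_format, of "s - x" x "y - s"]
          w_g[of s] w_g[of "x + y - s"] xy s by (simp add: algebra_simps)
      then show ?thesis
        using w_g[of s] w_g[of "x + y - s"] w_g[of x] w_g[of y] xy s by (simp add: algebra_simps)
    qed
    have z: "(1 - t) * x + t * y \<in> {x..y}"
      using convex_combination_strictly_between[OF xy(3) t] by simp
    show "w ((1 - t) * x + t * y) < ereal (1 - t) * w x + ereal t * w y"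
      using convex_on_strictly_below_chord[OF xy(3) g_conv pairs t]
        w_g[OF z] w_g[of x] w_g[of y] xy by simp
  qed
qed

lemma continuous_on_ereal_pair_sum:
  fixes w :: "real \<Rightarrow> ereal"
  assumes ninf: "\<forall>z\<in>{0..L}. w z \<noteq> -\<infinity>" and cont: "continuous_on {0..L} w"
    and f: "continuous_on A f" "f ` A \<subseteq> {0..L}" and g: "continuous_on A g" "g ` A \<subseteq> {0..L}"
  shows "continuous_on A (\<lambda>e. w (f e) + w (g e))"
  using ninf f(2) g(2)
  by (intro continuous_on_add_ereal continuous_on_compose2[OF cont f(1) f(2)]
      continuous_on_compose2[OF cont g(1) g(2)]) auto

lemma crossing_le_adjacent_iff:
  fixes w :: "real \<Rightarrow> ereal"
  assumes ninf: "\<forall>z\<in>{0..L}. w z \<noteq> -\<infinity>" and cont: "continuous_on {0..L} w"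
  shows "crossing_le_adjacent w L \<longleftrightarrow>
    (\<forall>d0 d1 \<delta>. 0 < d0 \<and> 0 < d1 \<and> 0 < \<delta> \<and> d0 + d1 + \<delta> \<le> L \<longrightarrow>
       w (d0 + \<delta>) + w (d1 + \<delta>) \<le> w d1 + w d0)"
    (is "_ \<longleftrightarrow> ?interior")
proof
  assume adjacent: "crossing_le_adjacent w L"
  show ?interior
  proof (intro allI impI)
    fix d0 d1 \<delta> :: real
    assume "0 < d0 \<and> 0 < d1 \<and> 0 < \<delta> \<and> d0 + d1 + \<delta> \<le> L"
    then have "w (d0 + \<delta>) + w (\<delta> + d1) \<le> w d0 + w d1"
      using adjacent[unfolded crossing_le_adjacent_def, rule_format, of d0 \<delta> d1] by simp
    then show "w (d0 + \<delta>) + w (d1 + \<delta>) \<le> w d1 + w d0"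
      by (simp add: add.commute)
  qed
next
  assume interior: ?interior
  show "crossing_le_adjacent w L"
    unfolding crossing_le_adjacent_def
  proof (intro allI impI)
    fix p q r :: real
    assume pqr: "0 \<le> p \<and> 0 \<le> q \<and> 0 \<le> r \<and> p + q + r \<le> L"
    show "w (p + q) + w (q + r) \<le> w p + w r"
    proof (cases "q = 0")
      case True
      then show ?thesis by simp
    next
      case False
      define c where "c = q / 4"
      have c: "0 < c" "2 * c < q"
        using False pqr by (auto simp: c_def)
      \<comment> \<open>shrink the middle gap by \<open>2 e\<close> to make all gaps positive, then let \<open>e \<rightarrow> 0\<close>\<close>
      define F G where "F e = w (p + q - e) + w (q + r - e)" and "G e = w (p + e) + w (r + e)" for e
      have "F 0 \<le> G 0"
      proof (rule continuous_on_closure_le[where T = "{0<..c}"])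
        have "closure {0<..c} = {0..c}"
          using c by simp
        then show "continuous_on (closure {0<..c}) F" "continuous_on (closure {0<..c}) G"
          unfolding F_def G_def using c pqr
          by (auto intro!: continuous_on_ereal_pair_sum[OF ninf cont] continuous_intros)
        show "F e \<le> G e" if "e \<in> {0<..c}" for e
          using interior[rule_format, of "p + e" "r + e" "q - 2 * e"] that c pqr
          by (simp add: F_def G_def algebra_simps)
      qed (use c in simp)
      then show ?thesis by (simp add: F_def G_def)
    qed
  qed
qed

lemma crossing_less_adjacent_interior_imp_le:
  fixes w :: "real \<Rightarrow> ereal"
  assumes ninf: "\<forall>z\<in>{0..L}. w z \<noteq> -\<infinity>" and cont: "continuous_on {0..L} w"
    and strict: "\<forall>d0 d1 \<delta>. 0 < d0 \<and> 0 < d1 \<and> 0 < \<delta> \<and> d0 + d1 + \<delta> \<le> L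
      \<and> w (d0 + \<delta>) + w (d1 + \<delta>) \<noteq> \<infinity> \<longrightarrow> w (d0 + \<delta>) + w (d1 + \<delta>) < w d1 + w d0"
  shows "\<forall>d0 d1 \<delta>. 0 < d0 \<and> 0 < d1 \<and> 0 < \<delta> \<and> d0 + d1 + \<delta> \<le> L \<longrightarrow>
      w (d0 + \<delta>) + w (d1 + \<delta>) \<le> w d1 + w d0"
proof (intro allI impI)
  fix d0 d1 \<delta> :: real
  assume d: "0 < d0 \<and> 0 < d1 \<and> 0 < \<delta> \<and> d0 + d1 + \<delta> \<le> L"
  define \<phi> where "\<phi> t = w (d0 + t) + w (d1 + t)" for t
  have \<phi>_below: "\<phi> t < w d1 + w d0" if "0 < t" "t \<le> \<delta>" "\<phi> t \<noteq> \<infinity>" for t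
    using strict[rule_format, of d0 d1 t] that d unfolding \<phi>_def by auto
  have "\<phi> \<delta> \<le> w d1 + w d0"
  proof (rule ccontr)
    assume above: "\<not> \<phi> \<delta> \<le> w d1 + w d0"
    then have "\<phi> \<delta> = \<infinity>"
      using \<phi>_below[of \<delta>] d by fastforce
    moreover have "w d1 + w d0 \<noteq> \<infinity>" "w d1 + w d0 \<noteq> -\<infinity>"
      using above ninf d by auto
    ultimately obtain c where c: "w d1 + w d0 = ereal c" and \<phi>_\<delta>: "\<phi> \<delta> = \<infinity>"
      by (cases "w d1 + w d0") auto
    \<comment> \<open>on its way from the finite value \<open>\<phi> 0\<close> to \<open>\<infinity>\<close>, \<open>\<phi>\<close> must pass through \<open>c + 1\<close>\<close>
    have "continuous_on {0..\<delta>} \<phi>"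
      unfolding \<phi>_def using d
      by (auto intro!: continuous_on_ereal_pair_sum[OF ninf cont] continuous_intros)
    moreover have "\<phi> 0 \<le> ereal (c + 1)"
      using c by (simp add: \<phi>_def add.commute)
    ultimately obtain t where t: "0 \<le> t" "t \<le> \<delta>" "\<phi> t = ereal (c + 1)"
      using IVT'[of \<phi> 0 "ereal (c + 1)" \<delta>] \<phi>_\<delta> d by auto
    moreover have "t \<noteq> 0"
      using t c by (auto simp: \<phi>_def add.commute)
    ultimately show False
      using \<phi>_below[of t] c by auto
  qed
  then show "w (d0 + \<delta>) + w (d1 + \<delta>) \<le> w d1 + w d0"
    by (simp add: \<phi>_def)
qed

lemma crossing_less_adjacent_zero_gap:
  fixes w :: "real \<Rightarrow> ereal"
  assumes ninf: "\<forall>z\<in>{0..L}. w z \<noteq> -\<infinity>" and cont: "continuous_on {0..L} w"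
    and conv: "ereal_convex_on {0..L} w"
    and strict: "\<forall>d0 d1 \<delta>. 0 < d0 \<and> 0 < d1 \<and> 0 < \<delta> \<and> d0 + d1 + \<delta> \<le> L
      \<and> w (d0 + \<delta>) + w (d1 + \<delta>) \<noteq> \<infinity> \<longrightarrow> w (d0 + \<delta>) + w (d1 + \<delta>) < w d1 + w d0"
    and qr: "0 < q" "0 \<le> r" "q + r \<le> L"
    and fin: "w 0 \<noteq> \<infinity>" "w r \<noteq> \<infinity>" "w q + w (q + r) \<noteq> \<infinity>"
  shows "w q + w (q + r) < w 0 + w r"
proof -
  define M where "M = q + r"
  have M: "0 < M" "M \<le> L" "w M \<noteq> \<infinity>"
    using qr fin(3) ninf unfolding M_def by auto
  have nested: "crossing_le_nested w L"
    using conv crossing_le_nested_iff_ereal_convex_on[OF ninf cont] by simp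
  obtain g where w_g: "\<And>s. s \<in> {0..M} \<Longrightarrow> w s = ereal (g s)" and g_cont: "continuous_on {0..M} g"
    using crossing_le_nested_real_part[OF nested ninf cont _ M(1) M(2) fin(1) M(3)] by auto
  define k where "k s = g s - g (M - s)" for s
  have "continuous_on {0..M} k"
    unfolding k_def
    by (intro continuous_intros g_cont continuous_on_compose2[OF g_cont]) auto
  moreover have "k v < k u" if uv: "0 < u" "u < v" "v < M" for u v
  proof -
    have "w (u + (v - u)) + w (M - v + (v - u)) < w (M - v) + w u"
      using strict[rule_format, of u "M - v" "v - u"] w_g[of v] w_g[of "M - u"] uv M
      by (simp add: algebra_simps)
    then show ?thesis
      using w_g[of v] w_g[of "M - u"] w_g[of "M - v"] w_g[of u] uv by (simp add: k_def)
  qed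
  ultimately have "k q < k 0"
    by (rule continuous_strict_antimono_on_closed) (use qr M_def in auto)
  then show ?thesis
    using w_g[of q] w_g[of M] w_g[of 0] w_g[of r] qr by (simp add: k_def M_def)
qed

lemma crossing_less_adjacent_iff:
  fixes w :: "real \<Rightarrow> ereal"
  assumes ninf: "\<forall>z\<in>{0..L}. w z \<noteq> -\<infinity>" and cont: "continuous_on {0..L} w"
    and conv: "ereal_convex_on {0..L} w"
  shows "crossing_less_adjacent w L \<longleftrightarrow>
    (\<forall>d0 d1 \<delta>. 0 < d0 \<and> 0 < d1 \<and> 0 < \<delta> \<and> d0 + d1 + \<delta> \<le> L
      \<and> w (d0 + \<delta>) + w (d1 + \<delta>) \<noteq> \<infinity> \<longrightarrow> w (d0 + \<delta>) + w (d1 + \<delta>) < w d1 + w d0)"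
    (is "_ \<longleftrightarrow> ?interior")
proof
  assume adjacent: "crossing_less_adjacent w L"
  show ?interior
  proof (intro allI impI)
    fix d0 d1 \<delta> :: real
    assume "0 < d0 \<and> 0 < d1 \<and> 0 < \<delta> \<and> d0 + d1 + \<delta> \<le> L \<and> w (d0 + \<delta>) + w (d1 + \<delta>) \<noteq> \<infinity>"
    then have "w (d0 + \<delta>) + w (\<delta> + d1) < w d0 + w d1"
      using adjacent[unfolded crossing_less_adjacent_def, rule_format, of d0 \<delta> d1]
      by (simp add: add.commute)
    then show "w (d0 + \<delta>) + w (d1 + \<delta>) < w d1 + w d0"
      by (simp add: add.commute)
  qed
next
  assume interior: ?interior
  show "crossing_less_adjacent w L"
    unfolding crossing_less_adjacent_def
  proof (intro allI impI)
    fix p q r :: real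
    assume pqr: "0 \<le> p \<and> 0 < q \<and> 0 \<le> r \<and> p + q + r \<le> L \<and> w (p + q) + w (q + r) \<noteq> \<infinity>"
    consider "w p = \<infinity> \<or> w r = \<infinity>" | "w p \<noteq> \<infinity>" "w r \<noteq> \<infinity>" "p = 0"
      | "w p \<noteq> \<infinity>" "w r \<noteq> \<infinity>" "r = 0" | "0 < p" "0 < r"
      using pqr by fastforce
    then show "w (p + q) + w (q + r) < w p + w r"
    proof cases
      case 1
      then have rhs: "w p + w r = \<infinity>"
        using ninf pqr by auto
      show ?thesis
        unfolding rhs using pqr by (simp add: top.not_eq_extremum)
    next
      case 2
      then show ?thesis
        using crossing_less_adjacent_zero_gap[OF ninf cont conv interior, of q r] pqr by simp
    next
      case 3
      then show ?thesis
        using crossing_less_adjacent_zero_gap[OF ninf cont conv interior, of q p] pqr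
        by (simp add: add.commute)
    next
      case 4
      then show ?thesis
        using interior[rule_format, of p r q] pqr by (simp add: add.commute)
    qed
  qed
qed

section \<open>Optimal pairings of four points\<close>

definition ordered_quadruple :: "real set \<Rightarrow> (nat \<Rightarrow> real) \<Rightarrow> bool" where
  "ordered_quadruple J x \<longleftrightarrow> (\<forall>i\<in>{1..4}. x i \<in> J) \<and> x 1 \<le> x 2 \<and> x 2 \<le> x 3 \<and> x 3 \<le> x 4"

lemma permutes_four_pairings:
  assumes \<sigma>: "\<sigma> permutes {1..4::nat}"
  obtains (adjacent) "{\<sigma> 1, \<sigma> 2} = {1, 2} \<and> {\<sigma> 3, \<sigma> 4} = {3, 4} \<or> {\<sigma> 1, \<sigma> 2} = {3, 4} \<and> {\<sigma> 3, \<sigma> 4} = {1, 2}"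
    | (crossing) "{\<sigma> 1, \<sigma> 2} = {1, 3} \<and> {\<sigma> 3, \<sigma> 4} = {2, 4} \<or> {\<sigma> 1, \<sigma> 2} = {2, 4} \<and> {\<sigma> 3, \<sigma> 4} = {1, 3}"
    | (nested) "{\<sigma> 1, \<sigma> 2} = {1, 4} \<and> {\<sigma> 3, \<sigma> 4} = {2, 3} \<or> {\<sigma> 1, \<sigma> 2} = {2, 3} \<and> {\<sigma> 3, \<sigma> 4} = {1, 4}"
proof -
  have "\<sigma> i \<in> {1, 2, 3, 4}" if "i \<in> {1, 2, 3, 4}" for i
    using permutes_in_image[OF \<sigma>, of i] that by auto
  then have range: "\<sigma> 1 \<in> {1, 2, 3, 4}" "\<sigma> 2 \<in> {1, 2, 3, 4}" "\<sigma> 3 \<in> {1, 2, 3, 4}" "\<sigma> 4 \<in> {1, 2, 3, 4}"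
    by simp_all
  have "distinct [\<sigma> 1, \<sigma> 2, \<sigma> 3, \<sigma> 4]"
    using permutes_inj[OF \<sigma>] by (simp add: inj_eq)
  with range show ?thesis
    using that by (simp add: doubleton_eq_iff) (elim disjE; simp)
qed

lemma mset_doubleton_eq_iff: "{#a, b#} = {#c, d#} \<longleftrightarrow> a = c \<and> b = d \<or> a = d \<and> b = c"
  by (metis add_mset_commute add_mset_eq_singleton_iff add_eq_conv_ex)

lemma pair_costs_symmetric:
  assumes sym: "\<And>i j. i \<in> {1..4} \<Longrightarrow> j \<in> {1..4} \<Longrightarrow> W (x i) (x j) = W (x j) (x i)"
  shows "{pair_cost W x \<sigma> | \<sigma>. \<sigma> permutes {1..4::nat}} =
    {W (x 1) (x 2) + W (x 3) (x 4), W (x 1) (x 3) + W (x 2) (x 4), W (x 1) (x 4) + W (x 2) (x 3)}"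
proof (intro equalityI subsetI)
  fix c assume "c \<in> {pair_cost W x \<sigma> | \<sigma>. \<sigma> permutes {1..4::nat}}"
  then obtain \<sigma> where \<sigma>: "\<sigma> permutes {1..4::nat}" and c: "c = pair_cost W x \<sigma>"
    by blast
  show "c \<in> {W (x 1) (x 2) + W (x 3) (x 4), W (x 1) (x 3) + W (x 2) (x 4), W (x 1) (x 4) + W (x 2) (x 3)}"
    using \<sigma> by (rule permutes_four_pairings)
      (auto simp: c pair_cost_def doubleton_eq_iff sym add.commute)
next
  have "id permutes {1..4::nat}" "Transposition.transpose 2 3 permutes {1..4::nat}"
    "Transposition.transpose 2 4 permutes {1..4::nat}"
    by (auto intro: permutes_id permutes_swap_id)
  then have "pair_cost W x id \<in> {pair_cost W x \<sigma> | \<sigma>. \<sigma> permutes {1..4::nat}}"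
    "pair_cost W x (Transposition.transpose 2 3) \<in> {pair_cost W x \<sigma> | \<sigma>. \<sigma> permutes {1..4::nat}}"
    "pair_cost W x (Transposition.transpose 2 4) \<in> {pair_cost W x \<sigma> | \<sigma>. \<sigma> permutes {1..4::nat}}"
    by blast+
  then show "c \<in> {pair_cost W x \<sigma> | \<sigma>. \<sigma> permutes {1..4::nat}}"
    if "c \<in> {W (x 1) (x 2) + W (x 3) (x 4), W (x 1) (x 3) + W (x 2) (x 4), W (x 1) (x 4) + W (x 2) (x 3)}"
    for c
    using that by (auto simp: pair_cost_def sym)
qed

lemma well_ordering_iff_crossing_minimal:
  "well_ordering W J \<longleftrightarrow>
     (\<forall>x\<in>J. \<forall>y\<in>J. W x y \<noteq> -\<infinity>) \<and> (\<forall>x\<in>J. \<forall>y\<in>J. W x y = W y x) \<and>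
     continuous_on (J \<times> J) (\<lambda>(x, y). W x y) \<and>
     (\<forall>x. ordered_quadruple J x \<longrightarrow>
        W (x 1) (x 3) + W (x 2) (x 4) \<le> W (x 1) (x 2) + W (x 3) (x 4) \<and>
        W (x 1) (x 3) + W (x 2) (x 4) \<le> W (x 1) (x 4) + W (x 2) (x 3))"
proof -
  have "W (x 1) (x 3) + W (x 2) (x 4) = Min {pair_cost W x \<sigma> | \<sigma>. \<sigma> permutes {1..4}} \<longleftrightarrow>
      W (x 1) (x 3) + W (x 2) (x 4) \<le> W (x 1) (x 2) + W (x 3) (x 4) \<and>
      W (x 1) (x 3) + W (x 2) (x 4) \<le> W (x 1) (x 4) + W (x 2) (x 3)"
    if sym: "\<forall>x\<in>J. \<forall>y\<in>J. W x y = W y x" and x: "ordered_quadruple J x" for x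
  proof -
    have "{pair_cost W x \<sigma> | \<sigma>. \<sigma> permutes {1..4}} =
      {W (x 1) (x 2) + W (x 3) (x 4), W (x 1) (x 3) + W (x 2) (x 4), W (x 1) (x 4) + W (x 2) (x 3)}"
      by (rule pair_costs_symmetric) (use sym x in \<open>auto simp: ordered_quadruple_def\<close>)
    then show ?thesis
      by (auto simp: min_def)
  qed
  then show ?thesis
    unfolding well_ordering_def ordered_quadruple_def[symmetric] by blast
qed

lemma strict_pairing_condition_imp_strict_crossing:
  assumes wo: "well_ordering W J" and x: "ordered_quadruple J x"
    and strict: "\<forall>\<sigma>. \<sigma> permutes {1..4} \<and> W (x 1) (x 3) + W (x 2) (x 4) = pair_cost W x \<sigma> \<longrightarrow>
      W (x 1) (x 3) + W (x 2) (x 4) = \<infinity> \<or>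
      {# x 1, x 3 #} = {# x (\<sigma> 1), x (\<sigma> 2) #} \<or> {# x 1, x 3 #} = {# x (\<sigma> 3), x (\<sigma> 4) #}"
  shows "(x 2 < x 3 \<and> W (x 1) (x 3) + W (x 2) (x 4) \<noteq> \<infinity> \<longrightarrow>
           W (x 1) (x 3) + W (x 2) (x 4) < W (x 1) (x 2) + W (x 3) (x 4)) \<and>
         (x 1 < x 2 \<and> x 3 < x 4 \<and> W (x 1) (x 3) + W (x 2) (x 4) \<noteq> \<infinity> \<longrightarrow>
           W (x 1) (x 3) + W (x 2) (x 4) < W (x 1) (x 4) + W (x 2) (x 3))"
    (is "(_ \<longrightarrow> ?c13 < ?c12) \<and> (_ \<longrightarrow> _ < ?c14)")
proof -
  have le: "?c13 \<le> ?c12" "?c13 \<le> ?c14"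
    using wo x by (simp_all add: well_ordering_iff_crossing_minimal)
  have order: "x 1 \<le> x 2" "x 2 \<le> x 3" "x 3 \<le> x 4"
    using x by (simp_all add: ordered_quadruple_def)
  have swap: "Transposition.transpose 2 4 permutes {1..4::nat}"
    by (rule permutes_swap_id) auto
  have "x 3 \<in> J" "x 2 \<in> J"
    using x by (simp_all add: ordered_quadruple_def)
  then have sym: "W (x 3) (x 2) = W (x 2) (x 3)"
    using wo by (simp add: well_ordering_def)
  have "?c13 = \<infinity> \<or> {#x 1, x 3#} = {#x 1, x 2#} \<or> {#x 1, x 3#} = {#x 3, x 4#}" if "?c13 = ?c12"
    using strict[rule_format, of id] that by (simp add: permutes_id pair_cost_def)
  then have adjacent: "x 2 < x 3 \<and> ?c13 \<noteq> \<infinity> \<longrightarrow> ?c13 < ?c12"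
    using le(1) order by (auto simp: le_less mset_doubleton_eq_iff)
  have "?c13 = \<infinity> \<or> {#x 1, x 3#} = {#x 1, x 4#} \<or> {#x 1, x 3#} = {#x 3, x 2#}" if "?c13 = ?c14"
    using strict[rule_format, of "Transposition.transpose 2 4"] swap sym that by (simp add: pair_cost_def)
  then have nested: "x 1 < x 2 \<and> x 3 < x 4 \<and> ?c13 \<noteq> \<infinity> \<longrightarrow> ?c13 < ?c14"
    using le(2) order by (auto simp: le_less mset_doubleton_eq_iff)
  show ?thesis
    using adjacent nested ..
qed

lemma doubleton_eq_imp_mset_eq: "{i, j} = {k, l} \<Longrightarrow> {#x i, x j#} = {#x k, x l#}"
  by (auto simp: doubleton_eq_iff add_mset_commute)

lemma strict_crossing_imp_strict_pairing_condition:
  assumes wo: "well_ordering W J" and x: "ordered_quadruple J x"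
    and strict: "(x 2 < x 3 \<and> W (x 1) (x 3) + W (x 2) (x 4) \<noteq> \<infinity> \<longrightarrow>
           W (x 1) (x 3) + W (x 2) (x 4) < W (x 1) (x 2) + W (x 3) (x 4)) \<and>
         (x 1 < x 2 \<and> x 3 < x 4 \<and> W (x 1) (x 3) + W (x 2) (x 4) \<noteq> \<infinity> \<longrightarrow>
           W (x 1) (x 3) + W (x 2) (x 4) < W (x 1) (x 4) + W (x 2) (x 3))"
    (is "(_ \<longrightarrow> ?c13 < ?c12) \<and> (_ \<longrightarrow> _ < ?c14)")
    and \<sigma>: "\<sigma> permutes {1..4}" and tie: "W (x 1) (x 3) + W (x 2) (x 4) = pair_cost W x \<sigma>"
  shows "W (x 1) (x 3) + W (x 2) (x 4) = \<infinity> \<or>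
    {# x 1, x 3 #} = {# x (\<sigma> 1), x (\<sigma> 2) #} \<or> {# x 1, x 3 #} = {# x (\<sigma> 3), x (\<sigma> 4) #}"
proof -
  have sym: "W (x i) (x j) = W (x j) (x i)" if "i \<in> {1..4}" "j \<in> {1..4}" for i j
    using wo x that by (simp add: well_ordering_def ordered_quadruple_def)
  have order: "x 1 \<le> x 2" "x 2 \<le> x 3" "x 3 \<le> x 4"
    using x by (simp_all add: ordered_quadruple_def)
  from \<sigma> show ?thesis
  proof (rule permutes_four_pairings)
    assume pairs: "{\<sigma> 1, \<sigma> 2} = {1, 2} \<and> {\<sigma> 3, \<sigma> 4} = {3, 4} \<or> {\<sigma> 1, \<sigma> 2} = {3, 4} \<and> {\<sigma> 3, \<sigma> 4} = {1, 2}"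
    then have "pair_cost W x \<sigma> = ?c12"
      by (auto simp: pair_cost_def doubleton_eq_iff sym add.commute)
    then have "?c13 = \<infinity> \<or> x 2 = x 3"
      using strict tie order by auto
    then show ?thesis
      using pairs by (auto dest!: doubleton_eq_imp_mset_eq[where x = x])
  next
    assume "{\<sigma> 1, \<sigma> 2} = {1, 3} \<and> {\<sigma> 3, \<sigma> 4} = {2, 4} \<or> {\<sigma> 1, \<sigma> 2} = {2, 4} \<and> {\<sigma> 3, \<sigma> 4} = {1, 3}"
    then show ?thesis
      by (auto dest!: doubleton_eq_imp_mset_eq[where x = x])
  next
    assume pairs: "{\<sigma> 1, \<sigma> 2} = {1, 4} \<and> {\<sigma> 3, \<sigma> 4} = {2, 3} \<or> {\<sigma> 1, \<sigma> 2} = {2, 3} \<and> {\<sigma> 3, \<sigma> 4} = {1, 4}"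
    then have "pair_cost W x \<sigma> = ?c14"
      by (auto simp: pair_cost_def doubleton_eq_iff sym add.commute)
    then have "?c13 = \<infinity> \<or> x 1 = x 2 \<or> x 3 = x 4"
      using strict tie order by auto
    then show ?thesis
      using pairs by (auto dest!: doubleton_eq_imp_mset_eq[where x = x])
  qed
qed

lemma strictly_well_ordering_iff_crossing_strictly_minimal:
  "strictly_well_ordering W J \<longleftrightarrow> well_ordering W J \<and>
     (\<forall>x. ordered_quadruple J x \<longrightarrow>
        (x 2 < x 3 \<and> W (x 1) (x 3) + W (x 2) (x 4) \<noteq> \<infinity> \<longrightarrow>
           W (x 1) (x 3) + W (x 2) (x 4) < W (x 1) (x 2) + W (x 3) (x 4)) \<and>
        (x 1 < x 2 \<and> x 3 < x 4 \<and> W (x 1) (x 3) + W (x 2) (x 4) \<noteq> \<infinity> \<longrightarrow>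
           W (x 1) (x 3) + W (x 2) (x 4) < W (x 1) (x 4) + W (x 2) (x 3)))"
  using strict_pairing_condition_imp_strict_crossing strict_crossing_imp_strict_pairing_condition
  unfolding strictly_well_ordering_def ordered_quadruple_def by blast

section \<open>Translation-invariant interactions\<close>

lemma ordered_quadruple_gaps:
  "(\<forall>x. ordered_quadruple {a..b} x \<longrightarrow> P (x 2 - x 1) (x 3 - x 2) (x 4 - x 3)) \<longleftrightarrow>
   (\<forall>p q r. 0 \<le> p \<and> 0 \<le> q \<and> 0 \<le> r \<and> p + q + r \<le> b - a \<longrightarrow> P p q r)"
proof
  assume quadruples: "\<forall>x. ordered_quadruple {a..b} x \<longrightarrow> P (x 2 - x 1) (x 3 - x 2) (x 4 - x 3)"
  show "\<forall>p q r. 0 \<le> p \<and> 0 \<le> q \<and> 0 \<le> r \<and> p + q + r \<le> b - a \<longrightarrow> P p q r"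
  proof (intro allI impI)
    fix p q r :: real
    assume pqr: "0 \<le> p \<and> 0 \<le> q \<and> 0 \<le> r \<and> p + q + r \<le> b - a"
    define x :: "nat \<Rightarrow> real" where
      "x i = (if i = 1 then a else if i = 2 then a + p else if i = 3 then a + p + q else a + p + q + r)" for i
    have "ordered_quadruple {a..b} x"
      using pqr by (auto simp: ordered_quadruple_def x_def)
    then have "P (x 2 - x 1) (x 3 - x 2) (x 4 - x 3)"
      using quadruples by blast
    then show "P p q r"
      by (simp add: x_def)
  qed
next
  assume gaps: "\<forall>p q r. 0 \<le> p \<and> 0 \<le> q \<and> 0 \<le> r \<and> p + q + r \<le> b - a \<longrightarrow> P p q r"
  show "\<forall>x. ordered_quadruple {a..b} x \<longrightarrow> P (x 2 - x 1) (x 3 - x 2) (x 4 - x 3)"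
  proof (intro allI impI)
    fix x assume "ordered_quadruple {a..b} x"
    then have "x 1 \<in> {a..b}" "x 4 \<in> {a..b}" "x 1 \<le> x 2" "x 2 \<le> x 3" "x 3 \<le> x 4"
      by (auto simp: ordered_quadruple_def)
    then show "P (x 2 - x 1) (x 3 - x 2) (x 4 - x 3)"
      using gaps[rule_format, of "x 2 - x 1" "x 3 - x 2" "x 4 - x 3"] by auto
  qed
qed

lemma even_on_differences:
  fixes w :: "real \<Rightarrow> ereal"
  assumes even: "\<forall>z\<in>{a - b..b - a}. w (- z) = w z" and "x \<in> {a..b}" "y \<in> {a..b}"
  shows "w (x - y) = w (y - x)"
  using even[rule_format, of "y - x"] assms(2,3) by simp

lemma translation_invariant_pair_costs:
  fixes w :: "real \<Rightarrow> ereal"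
  assumes even: "\<forall>z\<in>{a - b..b - a}. w (- z) = w z" and x: "ordered_quadruple {a..b} x"
  shows "w (x 1 - x 2) + w (x 3 - x 4) = w (x 2 - x 1) + w (x 4 - x 3)"
    and "w (x 1 - x 3) + w (x 2 - x 4) = w (x 2 - x 1 + (x 3 - x 2)) + w (x 3 - x 2 + (x 4 - x 3))"
    and "w (x 1 - x 4) + w (x 2 - x 3) = w (x 3 - x 2) + w (x 2 - x 1 + (x 3 - x 2) + (x 4 - x 3))"
proof -
  have flip: "w (x i - x j) = w (x j - x i)" if "i \<in> {1..4}" "j \<in> {1..4}" for i j
    using even_on_differences[OF even] x that unfolding ordered_quadruple_def by blast
  have "x 2 - x 1 + (x 3 - x 2) = x 3 - x 1" "x 3 - x 2 + (x 4 - x 3) = x 4 - x 2"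
    "x 2 - x 1 + (x 3 - x 2) + (x 4 - x 3) = x 4 - x 1"
    by simp_all
  then show "w (x 1 - x 2) + w (x 3 - x 4) = w (x 2 - x 1) + w (x 4 - x 3)"
    and "w (x 1 - x 3) + w (x 2 - x 4) = w (x 2 - x 1 + (x 3 - x 2)) + w (x 3 - x 2 + (x 4 - x 3))"
    and "w (x 1 - x 4) + w (x 2 - x 3) = w (x 3 - x 2) + w (x 2 - x 1 + (x 3 - x 2) + (x 4 - x 3))"
    using flip[of 1 2] flip[of 3 4] flip[of 1 3] flip[of 2 4] flip[of 1 4] flip[of 2 3]
    by (simp_all add: add.commute)
qed

lemma well_ordering_translation_invariant_iff:
  fixes w :: "real \<Rightarrow> ereal"
  assumes ninf: "\<forall>z\<in>{a - b..b - a}. w z \<noteq> -\<infinity>" and cont: "continuous_on {a - b..b - a} w"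
    and even: "\<forall>z\<in>{a - b..b - a}. w (- z) = w z"
  shows "well_ordering (\<lambda>x y. w (x - y)) {a..b} \<longleftrightarrow>
    crossing_le_nested w (b - a) \<and> crossing_le_adjacent w (b - a)"
proof -
  define P where "P p q r \<longleftrightarrow> w (p + q) + w (q + r) \<le> w p + w r \<and>
    w (p + q) + w (q + r) \<le> w q + w (p + q + r)" for p q r
  have "\<forall>x\<in>{a..b}. \<forall>y\<in>{a..b}. w (x - y) \<noteq> -\<infinity>"
    using ninf by auto
  moreover have "\<forall>x\<in>{a..b}. \<forall>y\<in>{a..b}. w (x - y) = w (y - x)"
    using even_on_differences[OF even] by blast
  moreover have "continuous_on ({a..b} \<times> {a..b}) (\<lambda>(x, y). w (x - y))"
    unfolding case_prod_unfold
    by (rule continuous_on_compose2[OF cont]) (auto intro!: continuous_intros)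
  ultimately have "well_ordering (\<lambda>x y. w (x - y)) {a..b} \<longleftrightarrow>
      (\<forall>x. ordered_quadruple {a..b} x \<longrightarrow>
         w (x 1 - x 3) + w (x 2 - x 4) \<le> w (x 1 - x 2) + w (x 3 - x 4) \<and>
         w (x 1 - x 3) + w (x 2 - x 4) \<le> w (x 1 - x 4) + w (x 2 - x 3))"
    by (simp add: well_ordering_iff_crossing_minimal)
  also have "\<dots> \<longleftrightarrow> (\<forall>x. ordered_quadruple {a..b} x \<longrightarrow> P (x 2 - x 1) (x 3 - x 2) (x 4 - x 3))"
    using translation_invariant_pair_costs[OF even] by (auto simp: P_def)
  also have "\<dots> \<longleftrightarrow> (\<forall>p q r. 0 \<le> p \<and> 0 \<le> q \<and> 0 \<le> r \<and> p + q + r \<le> b - a \<longrightarrow> P p q r)"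
    by (rule ordered_quadruple_gaps)
  also have "\<dots> \<longleftrightarrow> crossing_le_nested w (b - a) \<and> crossing_le_adjacent w (b - a)"
    unfolding P_def crossing_le_nested_def crossing_le_adjacent_def by blast
  finally show ?thesis .
qed

lemma strictly_well_ordering_translation_invariant_iff:
  fixes w :: "real \<Rightarrow> ereal"
  assumes even: "\<forall>z\<in>{a - b..b - a}. w (- z) = w z"
  shows "strictly_well_ordering (\<lambda>x y. w (x - y)) {a..b} \<longleftrightarrow> well_ordering (\<lambda>x y. w (x - y)) {a..b} \<and>
    crossing_less_nested w (b - a) \<and> crossing_less_adjacent w (b - a)"
proof -
  define P where "P p q r \<longleftrightarrow>
    (0 < q \<and> w (p + q) + w (q + r) \<noteq> \<infinity> \<longrightarrow> w (p + q) + w (q + r) < w p + w r) \<and>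
    (0 < p \<and> 0 < r \<and> w (p + q) + w (q + r) \<noteq> \<infinity> \<longrightarrow> w (p + q) + w (q + r) < w q + w (p + q + r))"
    for p q r
  have "strictly_well_ordering (\<lambda>x y. w (x - y)) {a..b} \<longleftrightarrow> well_ordering (\<lambda>x y. w (x - y)) {a..b} \<and>
      (\<forall>x. ordered_quadruple {a..b} x \<longrightarrow> P (x 2 - x 1) (x 3 - x 2) (x 4 - x 3))"
    unfolding strictly_well_ordering_iff_crossing_strictly_minimal
    using translation_invariant_pair_costs[OF even] by (auto simp: P_def)
  also have "\<dots> \<longleftrightarrow> well_ordering (\<lambda>x y. w (x - y)) {a..b} \<and>
      (\<forall>p q r. 0 \<le> p \<and> 0 \<le> q \<and> 0 \<le> r \<and> p + q + r \<le> b - a \<longrightarrow> P p q r)"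
    by (simp only: ordered_quadruple_gaps)
  also have "\<dots> \<longleftrightarrow> well_ordering (\<lambda>x y. w (x - y)) {a..b} \<and>
      crossing_less_nested w (b - a) \<and> crossing_less_adjacent w (b - a)"
    unfolding P_def crossing_less_nested_def crossing_less_adjacent_def
    by (blast intro: less_imp_le)
  finally show ?thesis .
qed

theorem mainTheorem2:
  fixes a b :: real and w :: "real \<Rightarrow> ereal"
  assumes ab: "a < b"
    and real_or_inf: "\<forall>z\<in>{a - b .. b - a}. w z \<noteq> -\<infinity>"
    and cont: "continuous_on {a - b .. b - a} w"
    and even: "\<forall>z\<in>{a - b .. b - a}. w (- z) = w z"
  shows "(well_ordering (\<lambda>x y. w (x - y)) {a..b} \<longleftrightarrow>
            ereal_convex_on {0 .. b - a} w \<and>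
            (\<forall>d0 d1 \<delta>. 0 < d0 \<and> 0 < d1 \<and> 0 < \<delta> \<and> d0 + d1 + \<delta> \<le> b - a \<longrightarrow>
               w (d0 + \<delta>) + w (d1 + \<delta>) \<le> w d1 + w d0))
       \<and> (strictly_well_ordering (\<lambda>x y. w (x - y)) {a..b} \<longleftrightarrow>
            ereal_strictly_convex_on {0 .. b - a} w \<and>
            (\<forall>d0 d1 \<delta>. 0 < d0 \<and> 0 < d1 \<and> 0 < \<delta> \<and> d0 + d1 + \<delta> \<le> b - a
                \<and> w (d0 + \<delta>) + w (d1 + \<delta>) \<noteq> \<infinity> \<longrightarrow>
               w (d0 + \<delta>) + w (d1 + \<delta>) < w d1 + w d0))"
proof -
  have "{0..b - a} \<subseteq> {a - b..b - a}"
    by auto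
  then have ninf: "\<forall>z\<in>{0..b - a}. w z \<noteq> -\<infinity>" and cont': "continuous_on {0..b - a} w"
    using real_or_inf continuous_on_subset[OF cont] by auto
  note wo_iff = well_ordering_translation_invariant_iff[OF real_or_inf cont even]
  note swo_iff = strictly_well_ordering_translation_invariant_iff[OF even]
  note convex_iff = crossing_le_nested_iff_ereal_convex_on[OF ninf cont']
  note strictly_convex_iff = ereal_strictly_convex_on_iff_crossing_less_nested[OF ninf cont']
  note adjacent_iff = crossing_le_adjacent_iff[OF ninf cont']
  note strictly_adjacent_iff = crossing_less_adjacent_iff[OF ninf cont']
  note strict_imp_le = crossing_less_adjacent_interior_imp_le[OF ninf cont']
  show ?thesis
    unfolding wo_iff swo_iff convex_iff strictly_convex_iff adjacent_iff
    using strictly_adjacent_iff strict_imp_le by blast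
qed

end
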